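(* Let $p \geqslant 3$ be a prime and $d \geqslant 1$ with $p^d \geqslant 7$, let $V$ be a $d$-dimensional vector space over $\mathbb{F}_p$ with basis $\mathbf{b}_1,\ldots,\mathbf{b}_d$, let $G = \mathrm{Sym}(V)$, and let $T \leqslant \mathrm{GL}(V)$ be the group of matrices diagonal with respect to this basis. Let $l_2 = d$ if $p \in \{3,5\}$ and $l_2 = d\,\Omega(p-1)$ otherwise. Then there exist subsets $Y_1,\ldots,Y_{l_2} \subseteq G$ such that \[ T > \bigcap_{x \in Y_1} T^x > \bigcap_{x \in Y_2} T^x > \cdots > \bigcap_{x \in Y_{l_2}} T^x = 1. \]
   Context: $\Omega(k)$ is the number of prime factors of $k$ counted with multiplicity. $\mathrm{GL}(V)$ is regarded as a subgroup of $\mathrm{Sym}(V)$; inclusions $>$ are strict. *)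

theory Defs
  imports "HOL-Algebra.Bij" "HOL-Computational_Algebra.Primes"
begin

definition bigOmega :: "nat \<Rightarrow> nat" where
  "bigOmega k = size (prime_factorization k)"

text \<open>V = F_p^d, vectors as coordinate functions nat => nat (coordinates in {0..<p}
  for indices < d, zero elsewhere); b_i is the i-th standard basis vector.\<close>
definition vecsp :: "nat \<Rightarrow> nat \<Rightarrow> (nat \<Rightarrow> nat) set" where
  "vecsp p d = {v. (\<forall>i<d. v i < p) \<and> (\<forall>i\<ge>d. v i = 0)}"

abbreviation SymV :: "nat \<Rightarrow> nat \<Rightarrow> ((nat \<Rightarrow> nat) \<Rightarrow> (nat \<Rightarrow> nat)) monoid" where
  "SymV p d \<equiv> BijGroup (vecsp p d)"

definition diagT :: "nat \<Rightarrow> nat \<Rightarrow> ((nat \<Rightarrow> nat) \<Rightarrow> (nat \<Rightarrow> nat)) set" where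
  "diagT p d = {(\<lambda>v\<in>vecsp p d. (\<lambda>i. (a i * v i) mod p)) | a. \<forall>i<d. 0 < a i \<and> a i < p}"

definition conjg :: "('a, 'b) monoid_scheme \<Rightarrow> 'a set \<Rightarrow> 'a \<Rightarrow> 'a set" where
  "conjg G H x = (\<lambda>h. inv\<^bsub>G\<^esub> x \<otimes>\<^bsub>G\<^esub> h \<otimes>\<^bsub>G\<^esub> x) ` H"

definition interconj :: "('a, 'b) monoid_scheme \<Rightarrow> 'a set \<Rightarrow> 'a set \<Rightarrow> 'a set" where
  "interconj G H Y = {g \<in> carrier G. \<forall>x\<in>Y. g \<in> conjg G H x}"

end

theory Submission
  imports Defs "HOL-Number_Theory.Number_Theory" "HOL-Combinatorics.Transposition"
begin

(* Identify T with the d-th power of the unit group of F_p. If x in Sym(V) acts by a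
   permutation f of F_p on the c-th coordinate only, then diag(a) lies in T^x iff f carries
   multiplication by a_c to multiplication by some scalar. For every divisor e of p - 1
   (with p >= 7 if e = 2) some f makes this happen exactly when a_c^e = 1: the transposition
   (0 1) for e = 1, the transposition (1 -1) for e = 2, and multiplication by an element of
   order e on the e-th roots of unity for e >= 3.
   Refine p - 1 = E_0 > E_1 > ... > E_m = 1 along the prime factorisation of p - 1 (or take
   m = 1 when p is 3 or 5) and impose a_c^(E_(j+1)) = 1 for one pair (c, j) at a time. This
   gives d * m intersections of conjugates of T ending in the trivial group, each step strict
   because an element of order E_j is an E_j-th but not an E_(j+1)-th root of unity. *)

section \<open>Conjugation in groups of bijections\<close>

lemma mem_conjg_iff:
  fixes G (structure)
  assumes "group G" "H \<subseteq> carrier G" "x \<in> carrier G" "g \<in> carrier G"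
  shows "g \<in> conjg G H x \<longleftrightarrow> (\<exists>h\<in>H. x \<otimes>\<^bsub>G\<^esub> g = h \<otimes>\<^bsub>G\<^esub> x)"
proof -
  interpret group G by fact
  have "g = inv x \<otimes> h \<otimes> x \<longleftrightarrow> x \<otimes> g = h \<otimes> x" if "h \<in> H" for h
  proof -
    have h: "h \<in> carrier G" using that assms(2) by blast
    have "g = inv x \<otimes> h \<otimes> x \<longleftrightarrow> g = inv x \<otimes> (h \<otimes> x)"
      using h assms(3) by (simp add: m_assoc)
    also have "\<dots> \<longleftrightarrow> x \<otimes> g = h \<otimes> x"
      using h assms(3,4) by (metis inv_solve_left m_closed)
    finally show ?thesis .
  qed
  then show ?thesis unfolding conjg_def by blast
qed

lemma conjg_one:
  fixes G (structure)
  assumes "group G" "H \<subseteq> carrier G"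
  shows "conjg G H \<one>\<^bsub>G\<^esub> = H"
proof -
  interpret group G by fact
  have "inv \<one> \<otimes> h \<otimes> \<one> = h" if "h \<in> H" for h
    using that assms(2) by auto
  then show ?thesis unfolding conjg_def by simp
qed

lemma Bij_if_inj_on_finite:
  assumes "finite S" "f ` S \<subseteq> S" "inj_on f S" "f \<in> extensional S"
  shows "f \<in> Bij S"
proof -
  have "f ` S = S" using endo_inj_surj assms(1-3) .
  then show ?thesis using assms(3,4) by (simp add: Bij_def bij_betw_def)
qed

lemma BijGroup_mult_eq_iff:
  assumes "f \<in> Bij S" "g \<in> Bij S" "h \<in> Bij S" "k \<in> Bij S"
  shows "f \<otimes>\<^bsub>BijGroup S\<^esub> g = h \<otimes>\<^bsub>BijGroup S\<^esub> k \<longleftrightarrow> (\<forall>v\<in>S. f (g v) = h (k v))"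
proof -
  have mult: "x \<otimes>\<^bsub>BijGroup S\<^esub> y = compose S x y" if "x \<in> Bij S" "y \<in> Bij S" for x y
    using that by (simp add: BijGroup_def)
  have "f \<otimes>\<^bsub>BijGroup S\<^esub> g = h \<otimes>\<^bsub>BijGroup S\<^esub> k \<longleftrightarrow> compose S f g = compose S h k"
    using assms by (simp only: mult)
  also have "\<dots> \<longleftrightarrow> (\<forall>v\<in>S. f (g v) = h (k v))"
  proof
    assume eq: "compose S f g = compose S h k"
    show "\<forall>v\<in>S. f (g v) = h (k v)"
    proof
      fix v assume "v \<in> S"
      then show "f (g v) = h (k v)" using fun_cong[OF eq, of v] by (simp add: compose_eq)
    qed
  next
    assume "\<forall>v\<in>S. f (g v) = h (k v)"
    then show "compose S f g = compose S h k" unfolding compose_def by (intro restrict_ext) blast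
  qed
  finally show ?thesis .
qed

section \<open>Diagonal maps and coordinate permutations of F_p^d\<close>

definition diag_map :: "nat \<Rightarrow> nat \<Rightarrow> (nat \<Rightarrow> nat) \<Rightarrow> (nat \<Rightarrow> nat) \<Rightarrow> nat \<Rightarrow> nat" where
  "diag_map p d a = (\<lambda>v\<in>vecsp p d. \<lambda>i. a i * v i mod p)"

definition coord_perm :: "nat \<Rightarrow> nat \<Rightarrow> nat \<Rightarrow> (nat \<Rightarrow> nat) \<Rightarrow> (nat \<Rightarrow> nat) \<Rightarrow> nat \<Rightarrow> nat" where
  "coord_perm p d c f = (\<lambda>v\<in>vecsp p d. v(c := f (v c)))"

lemma diagT_eq: "diagT p d = {diag_map p d a | a. \<forall>i<d. 0 < a i \<and> a i < p}"
  unfolding diagT_def diag_map_def ..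

lemma finite_vecsp: "finite (vecsp p d)"
proof -
  have "vecsp p d = {v. \<forall>i. (i \<in> {..<d} \<longrightarrow> v i \<in> {..<p}) \<and> (i \<notin> {..<d} \<longrightarrow> v i = 0)}"
    unfolding vecsp_def by (auto simp: not_less)
  then show ?thesis by (simp only:) (rule finite_set_of_finite_funs; simp)
qed

lemma single_in_vecsp: "i < d \<Longrightarrow> u < p \<Longrightarrow> (\<lambda>_. 0)(i := u) \<in> vecsp p d"
  unfolding vecsp_def by auto

lemma vecsp_coord_less: "v \<in> vecsp p d \<Longrightarrow> i < d \<Longrightarrow> v i < p"
  unfolding vecsp_def by auto

lemma vecsp_eqI:
  assumes "v \<in> vecsp p d" "w \<in> vecsp p d" "\<And>i. i < d \<Longrightarrow> v i = w i"
  shows "v = w"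
proof
  show "v i = w i" for i
    using assms by (cases "i < d") (auto simp: vecsp_def)
qed

lemma diag_map_apply: "v \<in> vecsp p d \<Longrightarrow> diag_map p d a v = (\<lambda>i. a i * v i mod p)"
  unfolding diag_map_def by simp

lemma coord_perm_apply: "v \<in> vecsp p d \<Longrightarrow> coord_perm p d c f v = v(c := f (v c))"
  unfolding coord_perm_def by simp

lemma diag_map_in_vecsp: "0 < p \<Longrightarrow> v \<in> vecsp p d \<Longrightarrow> diag_map p d a v \<in> vecsp p d"
  by (auto simp: diag_map_apply vecsp_def)

lemma coord_perm_in_vecsp:
  "c < d \<Longrightarrow> (\<And>u. u < p \<Longrightarrow> f u < p) \<Longrightarrow> v \<in> vecsp p d \<Longrightarrow> coord_perm p d c f v \<in> vecsp p d"
  by (auto simp: coord_perm_apply vecsp_def)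

lemma coprime_if_less_prime: "prime p \<Longrightarrow> 0 < a \<Longrightarrow> a < p \<Longrightarrow> coprime a (p::nat)"
  by (metis coprime_commute nat_dvd_not_less prime_imp_coprime_nat)

lemma diag_map_Bij:
  assumes p: "prime p" and a: "\<forall>i<d. 0 < a i \<and> a i < p"
  shows "diag_map p d a \<in> Bij (vecsp p d)"
proof (rule Bij_if_inj_on_finite[OF finite_vecsp])
  show "diag_map p d a ` vecsp p d \<subseteq> vecsp p d"
    using diag_map_in_vecsp[OF prime_gt_0_nat[OF p]] by blast
  show "inj_on (diag_map p d a) (vecsp p d)"
  proof (rule inj_onI, rule vecsp_eqI)
    fix v w i
    assume v: "v \<in> vecsp p d" and w: "w \<in> vecsp p d"
      and eq: "diag_map p d a v = diag_map p d a w" and i: "i < d"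
    have "[a i * v i = a i * w i] (mod p)"
      using fun_cong[OF eq, of i] v w by (simp add: diag_map_apply cong_def)
    moreover have "coprime (a i) p"
      using a i p by (simp add: coprime_if_less_prime)
    ultimately have "[v i = w i] (mod p)" using cong_mult_lcancel_nat by blast
    then show "v i = w i" using v w i by (simp add: cong_def vecsp_coord_less)
  qed
qed (simp add: diag_map_def)

lemma coord_perm_Bij:
  assumes c: "c < d" and f: "bij_betw f {..<p} {..<p}"
  shows "coord_perm p d c f \<in> Bij (vecsp p d)"
proof (rule Bij_if_inj_on_finite[OF finite_vecsp])
  have "f u < p" if "u < p" for u using bij_betw_apply[OF f] that by auto
  then show "coord_perm p d c f ` vecsp p d \<subseteq> vecsp p d"
    using coord_perm_in_vecsp[OF c] by blast
  show "inj_on (coord_perm p d c f) (vecsp p d)"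
  proof (rule inj_onI)
    fix v w
    assume v: "v \<in> vecsp p d" and w: "w \<in> vecsp p d"
      and eq: "coord_perm p d c f v = coord_perm p d c f w"
    then have "f (v c) = f (w c)" by (metis coord_perm_apply fun_upd_same)
    then have "v c = w c"
      using bij_betw_imp_inj_on[OF f] v w c by (auto simp: vecsp_coord_less dest: inj_onD)
    then show "v = w" using eq v w by (metis coord_perm_apply fun_upd_triv fun_upd_upd)
  qed
qed (simp add: coord_perm_def)

lemma diagT_subset_carrier: "prime p \<Longrightarrow> diagT p d \<subseteq> carrier (SymV p d)"
  by (auto simp: diagT_eq BijGroup_def intro: diag_map_Bij)

lemma diag_map_eq_imp_eq:
  assumes "diag_map p d a = diag_map p d a'" "1 < p" "i < d" "a i < p" "a' i < p"
  shows "a i = a' i"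
proof -
  let ?v = "(\<lambda>_. 0)(i := 1)"
  have v: "?v \<in> vecsp p d"
    using assms(2,3) by (rule single_in_vecsp[rotated])
  have "diag_map p d a ?v i = diag_map p d a' ?v i" using assms(1) by simp
  then show ?thesis using v assms(4,5) by (simp add: diag_map_apply)
qed

lemma diag_map_one:
  assumes "\<forall>i<d. a i = 1"
  shows "diag_map p d a = \<one>\<^bsub>SymV p d\<^esub>"
proof -
  have "(\<lambda>i. a i * v i mod p) = v" if v: "v \<in> vecsp p d" for v
  proof
    show "a i * v i mod p = v i" for i
      using v assms by (cases "i < d") (auto simp: vecsp_def)
  qed
  then show ?thesis unfolding diag_map_def BijGroup_def by (auto intro: restrict_ext)
qed

definition intertwines_scalar :: "nat \<Rightarrow> (nat \<Rightarrow> nat) \<Rightarrow> nat \<Rightarrow> bool" where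
  "intertwines_scalar p f a \<longleftrightarrow> (\<exists>b. 0 < b \<and> b < p \<and> (\<forall>u<p. f (a * u mod p) = b * f u mod p))"

lemma coord_perm_diag_map_commute_iff:
  assumes p: "1 < p" and c: "c < d" and f_less: "\<And>u. u < p \<Longrightarrow> f u < p"
    and a: "\<forall>i<d. a i < p" and b: "\<forall>i<d. b i < p"
  shows "(\<forall>v\<in>vecsp p d. coord_perm p d c f (diag_map p d a v) = diag_map p d b (coord_perm p d c f v))
    \<longleftrightarrow> (\<forall>i<d. i \<noteq> c \<longrightarrow> a i = b i) \<and> (\<forall>u<p. f (a c * u mod p) = b c * f u mod p)"
    (is "(\<forall>v\<in>vecsp p d. ?lhs v = ?rhs v) \<longleftrightarrow> _")
proof -
  have lhs: "?lhs v = (\<lambda>i. a i * v i mod p)(c := f (a c * v c mod p))"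
    if v: "v \<in> vecsp p d" for v
    using coord_perm_apply[OF diag_map_in_vecsp[OF _ v]] p by (simp add: diag_map_apply[OF v])
  have rhs: "?rhs v = (\<lambda>i. b i * v i mod p)(c := b c * f (v c) mod p)"
    if v: "v \<in> vecsp p d" for v
  proof -
    have "coord_perm p d c f v \<in> vecsp p d" using c f_less v by (rule coord_perm_in_vecsp)
    then show ?thesis by (simp add: diag_map_apply coord_perm_apply[OF v] fun_eq_iff)
  qed
  show ?thesis
  proof safe
    assume comm: "\<forall>v\<in>vecsp p d. ?lhs v = ?rhs v"
    show "a i = b i" if "i < d" "i \<noteq> c" for i
    proof -
      have v: "(\<lambda>_. 0)(i := 1) \<in> vecsp p d" using that(1) p by (rule single_in_vecsp)
      have "?lhs ((\<lambda>_. 0)(i := 1)) i = ?rhs ((\<lambda>_. 0)(i := 1)) i" using comm v by simp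
      then show ?thesis unfolding lhs[OF v] rhs[OF v] using that a b by simp
    qed
    show "f (a c * u mod p) = b c * f u mod p" if "u < p" for u
    proof -
      have v: "(\<lambda>_. 0)(c := u) \<in> vecsp p d" using c that by (rule single_in_vecsp)
      have "?lhs ((\<lambda>_. 0)(c := u)) c = ?rhs ((\<lambda>_. 0)(c := u)) c" using comm v by simp
      then show ?thesis unfolding lhs[OF v] rhs[OF v] by simp
    qed
  next
    fix v assume v: "v \<in> vecsp p d" and ab: "\<forall>i<d. i \<noteq> c \<longrightarrow> a i = b i"
      and twist: "\<forall>u<p. f (a c * u mod p) = b c * f u mod p"
    show "?lhs v = ?rhs v"
    proof
      show "?lhs v i = ?rhs v i" for i
        using v ab twist c by (cases "i < d") (auto simp: lhs rhs vecsp_def)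
    qed
  qed
qed

lemma diag_map_mem_conjg_coord_perm_iff:
  assumes p: "prime p" and c: "c < d" and f: "bij_betw f {..<p} {..<p}"
    and a: "\<forall>i<d. 0 < a i \<and> a i < p"
  shows "diag_map p d a \<in> conjg (SymV p d) (diagT p d) (coord_perm p d c f)
    \<longleftrightarrow> intertwines_scalar p f (a c)"
proof -
  let ?x = "coord_perm p d c f" and ?G = "SymV p d"
  have p1: "1 < p" using p prime_gt_1_nat by blast
  have f_less: "f u < p" if "u < p" for u using bij_betw_apply[OF f] that by auto
  have x: "?x \<in> Bij (vecsp p d)" using c f by (rule coord_perm_Bij)
  have diag_Bij: "diag_map p d b \<in> Bij (vecsp p d)" if "\<forall>i<d. 0 < b i \<and> b i < p" for b
    using p that by (rule diag_map_Bij)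
  have commute_iff: "?x \<otimes>\<^bsub>?G\<^esub> diag_map p d a = diag_map p d b \<otimes>\<^bsub>?G\<^esub> ?x \<longleftrightarrow>
      (\<forall>i<d. i \<noteq> c \<longrightarrow> a i = b i) \<and> (\<forall>u<p. f (a c * u mod p) = b c * f u mod p)"
    if b: "\<forall>i<d. 0 < b i \<and> b i < p" for b
    unfolding BijGroup_mult_eq_iff[OF x diag_Bij[OF a] diag_Bij[OF b] x]
    using coord_perm_diag_map_commute_iff[OF p1 c f_less] a b by simp
  have "diag_map p d a \<in> conjg ?G (diagT p d) ?x \<longleftrightarrow>
      (\<exists>h\<in>diagT p d. ?x \<otimes>\<^bsub>?G\<^esub> diag_map p d a = h \<otimes>\<^bsub>?G\<^esub> ?x)"
    using x diag_Bij[OF a]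
    by (intro mem_conjg_iff[OF group_BijGroup diagT_subset_carrier[OF p]]) (simp_all add: BijGroup_def)
  also have "\<dots> \<longleftrightarrow> (\<exists>b. (\<forall>i<d. 0 < b i \<and> b i < p) \<and> (\<forall>i<d. i \<noteq> c \<longrightarrow> a i = b i) \<and>
      (\<forall>u<p. f (a c * u mod p) = b c * f u mod p))"
    unfolding diagT_eq using commute_iff by blast
  also have "\<dots> \<longleftrightarrow> intertwines_scalar p f (a c)"
  proof
    assume "intertwines_scalar p f (a c)"
    then obtain b0 where "0 < b0" "b0 < p" "\<forall>u<p. f (a c * u mod p) = b0 * f u mod p"
      unfolding intertwines_scalar_def by blast
    then show "\<exists>b. (\<forall>i<d. 0 < b i \<and> b i < p) \<and> (\<forall>i<d. i \<noteq> c \<longrightarrow> a i = b i) \<and>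
      (\<forall>u<p. f (a c * u mod p) = b c * f u mod p)"
      using a by (intro exI[of _ "a(c := b0)"]) auto
  qed (use c in \<open>auto simp: intertwines_scalar_def\<close>)
  finally show ?thesis .
qed

section \<open>Permutations of F_p detecting roots of unity\<close>

lemma intertwines_scalar_transpose_0_1:
  assumes p: "1 < p" and a: "0 < a" "a < p"
  shows "intertwines_scalar p (transpose 0 1) a \<longleftrightarrow> a = 1"
proof
  assume "intertwines_scalar p (transpose 0 1) a"
  then obtain b where b: "b < p" and twist: "\<forall>u<p. transpose 0 1 (a * u mod p) = b * transpose 0 1 u mod p"
    unfolding intertwines_scalar_def by blast
  have "b = 1" using twist[rule_format, of 0] p b by simp
  then have "transpose 0 1 a = 0" using twist[rule_format, of 1] p a by simp
  then show "a = 1" by (simp add: transpose_def split: if_splits)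
next
  assume "a = 1"
  moreover have "transpose 0 1 u < p" if "u < p" for u
    using that p by (simp add: transpose_def)
  ultimately show "intertwines_scalar p (transpose 0 1) a"
    unfolding intertwines_scalar_def using p by (intro exI[of _ 1]) simp
qed

lemma square_cong_one_iff:
  fixes p a :: nat
  assumes p: "prime p" and a: "0 < a" "a < p"
  shows "[a ^ 2 = 1] (mod p) \<longleftrightarrow> a = 1 \<or> a = p - 1"
proof -
  have "a ^ 2 - 1 = (a - 1) * (a + 1)"
    using a by (cases a) (simp_all add: power2_eq_square algebra_simps)
  moreover have "1 \<le> a ^ 2" using a by simp
  ultimately have "[a ^ 2 = 1] (mod p) \<longleftrightarrow> p dvd (a - 1) * (a + 1)"
    by (simp add: cong_altdef_nat)
  also have "\<dots> \<longleftrightarrow> p dvd a - 1 \<or> p dvd a + 1"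
    using p by (rule prime_dvd_mult_iff)
  also have "\<dots> \<longleftrightarrow> a = 1 \<or> a = p - 1"
    using a by (auto dest: dvd_imp_le)
  finally show ?thesis .
qed

lemma mult_mod_ne_neg_mult:
  fixes p a b u :: nat
  assumes p: "prime p" "2 < p" and ab: "[a + b = 0] (mod p)"
    and a: "0 < a" "a < p" and u: "0 < u" "u < p"
  shows "a * u mod p \<noteq> b * u mod p"
proof
  assume "a * u mod p = b * u mod p"
  then have "[a * u = b * u] (mod p)" by (simp add: cong_def)
  then have "[a * u + a * u = b * u + a * u] (mod p)" by (rule cong_add) (rule cong_refl)
  also have "b * u + a * u = (a + b) * u" by (simp add: algebra_simps)
  also have "[(a + b) * u = 0 * u] (mod p)" using ab by (rule cong_scalar_right)
  finally have "p dvd 2 * (a * u)" by (simp add: cong_0_iff mult_2)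
  then show False
    using p a u by (auto simp: prime_dvd_mult_iff dest: dvd_imp_le)
qed

(* The hypothesis p >= 7 is needed: for p = 5 the transposition (1 4) also carries
   multiplication by 2 to multiplication by 3. *)
lemma intertwines_scalar_transpose_neg:
  assumes p: "prime p" "7 \<le> p" and a: "0 < a" "a < p"
  shows "intertwines_scalar p (transpose 1 (p - 1)) a \<longleftrightarrow> a = 1 \<or> a = p - 1"
    (is "intertwines_scalar p ?\<tau> a \<longleftrightarrow> _")
proof
  assume "intertwines_scalar p ?\<tau> a"
  then obtain b where b: "0 < b" "b < p" and twist: "\<forall>u<p. ?\<tau> (a * u mod p) = b * ?\<tau> u mod p"
    unfolding intertwines_scalar_def by blast
  show "a = 1 \<or> a = p - 1"
  proof (rule ccontr)
    (* u = 1 forces b = -a; then u = 2 or u = 4 is fixed by the transposition together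
       with a * u, which would give a * u = -a * u. *)
    assume a_not: "\<not> (a = 1 \<or> a = p - 1)"
    have "a = b * (p - 1) mod p" using twist[rule_format, of 1] p a a_not by simp
    then have "[a + b = b * (p - 1) + b] (mod p)" by (intro cong_add cong_refl) (simp add: cong_def)
    also have "b * (p - 1) + b = b * p" using p by (cases p) (simp_all add: algebra_simps)
    also have "[b * p = 0] (mod p)" by (rule cong_mult_self_right)
    finally have ab: "[a + b = 0] (mod p)" .
    have fixed: "a * u mod p \<in> {1, p - 1}" if "u \<in> {2, 4}" for u
    proof (rule ccontr)
      assume "a * u mod p \<notin> {1, p - 1}"
      then have "a * u mod p = b * u mod p" using twist[rule_format, of u] that p by auto
      then show False using mult_mod_ne_neg_mult[OF p(1) _ ab a, of u] that p by auto
    qed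
    have "a * 4 mod p = 2 * (a * 2 mod p) mod p" by (simp add: mod_mult_right_eq mult.commute mult.left_commute)
    moreover have "2 * (p - 1) mod p = p - 2"
    proof -
      have "2 * (p - 1) = (p - 2) + p" using p by simp
      then have "2 * (p - 1) mod p = (p - 2) mod p" by (simp only: mod_add_self2)
      then show ?thesis using p by simp
    qed
    ultimately have "a * 4 mod p \<in> {2, p - 2}" using fixed[of 2] p by auto
    then show False using fixed[of 4] p by auto
  qed
next
  have neg: "(p - 1) * u mod p = (if u = 0 then 0 else p - u)" if "u < p" for u
  proof (cases "u = 0")
    case False
    have "int ((p - 1) * u) = int (p - u) + int ((u - 1) * p)"
      using False that p by (simp add: of_nat_diff algebra_simps)
    then have "(p - 1) * u = (p - u) + (u - 1) * p" by linarith
    then have "(p - 1) * u mod p = (p - u) mod p" by (simp only: mod_mult_self1)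
    then show ?thesis using False that by simp
  qed simp
  have tau_less: "?\<tau> u < p" if "u < p" for u
    using that p by (simp add: transpose_def)
  have tau_neg: "?\<tau> ((p - 1) * u mod p) = (p - 1) * ?\<tau> u mod p" if u: "u < p" for u
  proof -
    consider "u = 0" | "u = 1" | "u = p - 1" | "u \<notin> {0, 1, p - 1}" by blast
    then show ?thesis
      unfolding neg[OF u] neg[OF tau_less[OF u]] using p u by cases (auto simp: transpose_def)
  qed
  assume "a = 1 \<or> a = p - 1"
  then have "?\<tau> (a * u mod p) = a * ?\<tau> u mod p" if "u < p" for u
    using that tau_less tau_neg by auto
  then show "intertwines_scalar p ?\<tau> a"
    unfolding intertwines_scalar_def using a by blast
qed

definition scale_roots :: "nat \<Rightarrow> nat \<Rightarrow> nat \<Rightarrow> nat \<Rightarrow> nat" where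
  "scale_roots p e l u = (if [u ^ e = 1] (mod p) then l * u mod p else u)"

lemma root_mult_cong_iff:
  fixes p e a u :: nat
  assumes "[a ^ e = 1] (mod p)"
  shows "[(a * u mod p) ^ e = 1] (mod p) \<longleftrightarrow> [u ^ e = 1] (mod p)"
proof -
  have "[(a * u mod p) ^ e = a ^ e * u ^ e] (mod p)"
    by (simp add: cong_def power_mod power_mult_distrib)
  also have "[a ^ e * u ^ e = 1 * u ^ e] (mod p)"
    using assms by (rule cong_scalar_right)
  finally have "[(a * u mod p) ^ e = u ^ e] (mod p)" by simp
  then show ?thesis by (meson cong_sym cong_trans)
qed

lemma bij_betw_scale_roots:
  assumes p: "prime p" and e: "0 < e" and l: "[l ^ e = 1] (mod p)"
  shows "bij_betw (scale_roots p e l) {..<p} {..<p}"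
proof -
  have "coprime (l ^ e) p" using cong_imp_coprime[OF cong_sym[OF l]] by simp
  then have l_coprime: "coprime l p" using e by simp
  have "scale_roots p e l ` {..<p} \<subseteq> {..<p}"
    using prime_gt_0_nat[OF p] by (auto simp: scale_roots_def)
  moreover have "inj_on (scale_roots p e l) {..<p}"
  proof (rule inj_onI)
    fix u w assume u: "u \<in> {..<p}" and w: "w \<in> {..<p}"
      and eq: "scale_roots p e l u = scale_roots p e l w"
    have root_iff: "[scale_roots p e l v ^ e = 1] (mod p) \<longleftrightarrow> [v ^ e = 1] (mod p)" for v
      using root_mult_cong_iff[OF l] by (simp add: scale_roots_def)
    have same_roots: "[w ^ e = 1] (mod p) \<longleftrightarrow> [u ^ e = 1] (mod p)"
      using root_iff[of u] root_iff[of w] eq by simp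
    show "u = w"
    proof (cases "[u ^ e = 1] (mod p)")
      case True
      then have "[w ^ e = 1] (mod p)" using same_roots by simp
      then have "[l * u = l * w] (mod p)" using True eq by (simp add: scale_roots_def cong_def)
      then have "[u = w] (mod p)" using cong_mult_lcancel_nat[OF l_coprime] by blast
      then show ?thesis using u w by (simp add: cong_def)
    next
      case False
      then have "\<not> [w ^ e = 1] (mod p)" using same_roots by simp
      then show ?thesis using False eq by (simp add: scale_roots_def)
    qed
  qed
  ultimately show ?thesis by (simp add: bij_betw_def endo_inj_surj)
qed

lemma intertwines_scalar_scale_roots:
  assumes p: "prime p" and l: "[l ^ e = 1] (mod p)" "\<not> [l ^ 2 = 1] (mod p)" and a: "0 < a" "a < p"
  shows "intertwines_scalar p (scale_roots p e l) a \<longleftrightarrow> [a ^ e = 1] (mod p)"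
    (is "intertwines_scalar p ?\<phi> a \<longleftrightarrow> _")
proof
  have p1: "1 < p" using p by (rule prime_gt_1_nat)
  assume "intertwines_scalar p ?\<phi> a"
  then obtain b where twist: "\<forall>u<p. ?\<phi> (a * u mod p) = b * ?\<phi> u mod p"
    unfolding intertwines_scalar_def by blast
  show "[a ^ e = 1] (mod p)"
  proof (rule ccontr)
    (* Evaluating at the roots 1 and a * a' = 1 gives a = b * l and l = b * a', hence l^2 = 1. *)
    assume a_not_root: "\<not> [a ^ e = 1] (mod p)"
    have "coprime a p" using p a by (rule coprime_if_less_prime)
    obtain a' where a': "[a * a' = 1] (mod p)" using cong_solve_coprime_nat[OF \<open>coprime a p\<close>] by auto
    have a'_inv: "a * (a' mod p) mod p = 1" using a' p1 by (simp add: cong_def mod_mult_right_eq)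
    have "\<not> [(a' mod p) ^ e = 1] (mod p)"
    proof
      assume "[(a' mod p) ^ e = 1] (mod p)"
      moreover have "(a' mod p) * a mod p = 1" using a'_inv by (simp only: mult.commute)
      ultimately show False using root_mult_cong_iff[of "a' mod p" e p a] a_not_root by simp
    qed
    then have "l mod p = b * (a' mod p) mod p"
      using twist[rule_format, of "a' mod p"] a'_inv p1 by (simp add: scale_roots_def)
    then have "[a * l = a * (b * a')] (mod p)"
      by (intro cong_scalar_left) (simp add: cong_def mod_mult_right_eq)
    also have "[a * (b * a') = b * 1] (mod p)"
      using cong_scalar_left[OF a', of b] by (simp add: ac_simps)
    finally have al: "[a * l = b] (mod p)" by simp
    have "a = b * (l mod p) mod p"
      using twist[rule_format, of 1] a a_not_root p1 by (simp add: scale_roots_def)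
    then have bl: "[b * l = a] (mod p)" by (simp add: cong_def mod_mult_right_eq)
    have "[a * (l * l) = b * l] (mod p)"
      using cong_scalar_right[OF al, of l] by (simp add: ac_simps)
    also note bl
    finally have "[a * (l * l) = a * 1] (mod p)" by simp
    then have "[l * l = 1] (mod p)" using cong_mult_lcancel_nat[OF \<open>coprime a p\<close>] by blast
    then show False using l(2) by (simp add: power2_eq_square)
  qed
next
  assume a_root: "[a ^ e = 1] (mod p)"
  have "?\<phi> (a * u mod p) = a * ?\<phi> u mod p" for u
  proof (cases "[u ^ e = 1] (mod p)")
    case True
    then have "?\<phi> (a * u mod p) = l * (a * u mod p) mod p"
      using root_mult_cong_iff[OF a_root] by (simp add: scale_roots_def)
    also have "\<dots> = a * (l * u mod p) mod p"
      by (simp add: mod_mult_right_eq mult.left_commute)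
    finally show ?thesis using True by (simp add: scale_roots_def)
  next
    case False
    then show ?thesis using root_mult_cong_iff[OF a_root] by (simp add: scale_roots_def)
  qed
  then show "intertwines_scalar p ?\<phi> a" unfolding intertwines_scalar_def using a by blast
qed

lemma exists_residue_with_ord:
  assumes p: "prime p" and e: "e dvd p - 1"
  shows "\<exists>g. 0 < g \<and> g < p \<and> ord p g = e"
proof -
  have p1: "1 < p" using p by (rule prime_gt_1_nat)
  obtain r where r: "r \<in> totatives p" "ord p r = p - 1"
    using residue_prime_has_primroot[OF p] by blast
  obtain x where x: "p - 1 = e * x" using e by (auto elim: dvdE)
  then have x_pos: "0 < x" using p1 by (cases x) auto
  define g where "g = r ^ x mod p"
  have "ord p g = ord p (r ^ x)" by (simp add: g_def)
  also have "\<dots> = (p - 1) div gcd x (p - 1)"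
    using r by (simp add: ord_power totatives_def coprime_commute)
  also have "\<dots> = e" using x x_pos by simp
  finally have ord_g: "ord p g = e" .
  have "g \<noteq> 0"
  proof
    assume "g = 0"
    moreover have "[g ^ e = 1] (mod p)" using ord_divides[of g e p] ord_g by simp
    moreover have "0 < e" using x p1 by (cases e) auto
    ultimately show False using p1 by (simp add: cong_def power_0_left)
  qed
  then show ?thesis using ord_g p1 by (auto simp: g_def)
qed

definition detects_roots :: "nat \<Rightarrow> nat \<Rightarrow> (nat \<Rightarrow> nat) \<Rightarrow> bool" where
  "detects_roots p e f \<longleftrightarrow> bij_betw f {..<p} {..<p} \<and>
    (\<forall>a. 0 < a \<and> a < p \<longrightarrow> (intertwines_scalar p f a \<longleftrightarrow> [a ^ e = 1] (mod p)))"

lemma exists_detects_roots: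
  assumes p: "prime p" and e: "e dvd p - 1" and e2: "e = 2 \<Longrightarrow> 7 \<le> p"
  shows "\<exists>f. detects_roots p e f"
proof -
  have p1: "1 < p" using p by (rule prime_gt_1_nat)
  have "e \<noteq> 0" using e p1 by (cases e) auto
  then consider "e = 1" | "e = 2" | "3 \<le> e" by linarith
  then show ?thesis
  proof cases
    case 1
    have "intertwines_scalar p (transpose 0 1) a \<longleftrightarrow> [a ^ e = 1] (mod p)" if "0 < a" "a < p" for a
      using intertwines_scalar_transpose_0_1[OF p1 that] that 1 by (simp add: cong_def)
    moreover have "bij_betw (transpose 0 1) {..<p} {..<p}" using p1 by simp
    ultimately show ?thesis unfolding detects_roots_def by blast
  next
    case 2
    have "intertwines_scalar p (transpose 1 (p - 1)) a \<longleftrightarrow> [a ^ e = 1] (mod p)" if "0 < a" "a < p" for a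
      using intertwines_scalar_transpose_neg[OF p e2[OF 2] that] square_cong_one_iff[OF p that] 2
      by simp
    moreover have "bij_betw (transpose 1 (p - 1)) {..<p} {..<p}" using p1 by simp
    ultimately show ?thesis unfolding detects_roots_def by blast
  next
    case 3
    obtain l where "0 < l" "l < p" and ord_l: "ord p l = e"
      using exists_residue_with_ord[OF p e] by blast
    have l: "[l ^ e = 1] (mod p)" "\<not> [l ^ 2 = 1] (mod p)"
      using ord_divides[of l e p] ord_divides[of l 2 p] ord_l 3 by (auto dest: dvd_imp_le)
    have "bij_betw (scale_roots p e l) {..<p} {..<p}"
      using 3 by (intro bij_betw_scale_roots[OF p _ l(1)]) simp
    then show ?thesis unfolding detects_roots_def using intertwines_scalar_scale_roots[OF p l] by blast
  qed
qed

section \<open>The chain of intersections\<close>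

definition diag_roots :: "nat \<Rightarrow> nat \<Rightarrow> (nat \<times> nat) set \<Rightarrow> ((nat \<Rightarrow> nat) \<Rightarrow> nat \<Rightarrow> nat) set" where
  "diag_roots p d S = {diag_map p d a | a. (\<forall>i<d. 0 < a i \<and> a i < p) \<and> (\<forall>c e. (c, e) \<in> S \<longrightarrow> [a c ^ e = 1] (mod p))}"

lemma diag_roots_empty: "diag_roots p d {} = diagT p d"
  by (simp add: diag_roots_def diagT_eq)

lemma interconj_eq_diag_roots:
  assumes p: "prime p"
    and S: "\<And>c e. (c, e) \<in> S \<Longrightarrow> c < d \<and> detects_roots p e (\<phi> e)"
  shows "interconj (SymV p d) (diagT p d) (insert \<one>\<^bsub>SymV p d\<^esub> ((\<lambda>(c, e). coord_perm p d c (\<phi> e)) ` S))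
    = diag_roots p d S"
proof -
  let ?G = "SymV p d" and ?T = "diagT p d"
  have conj_one: "conjg ?G ?T \<one>\<^bsub>?G\<^esub> = ?T"
    using group_BijGroup diagT_subset_carrier[OF p] by (rule conjg_one)
  have conj_coord: "diag_map p d a \<in> conjg ?G ?T (coord_perm p d c (\<phi> e)) \<longleftrightarrow> [a c ^ e = 1] (mod p)"
    if ce: "(c, e) \<in> S" and a: "\<forall>i<d. 0 < a i \<and> a i < p" for a c e
  proof -
    have c: "c < d" and f: "bij_betw (\<phi> e) {..<p} {..<p}"
      and roots: "\<forall>a. 0 < a \<and> a < p \<longrightarrow> (intertwines_scalar p (\<phi> e) a \<longleftrightarrow> [a ^ e = 1] (mod p))"
      using S[OF ce] unfolding detects_roots_def by blast+
    have "diag_map p d a \<in> conjg ?G ?T (coord_perm p d c (\<phi> e)) \<longleftrightarrow> intertwines_scalar p (\<phi> e) (a c)"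
      using p c f a by (rule diag_map_mem_conjg_coord_perm_iff)
    also have "\<dots> \<longleftrightarrow> [a c ^ e = 1] (mod p)" using roots a c by blast
    finally show ?thesis .
  qed
  have mem_iff: "g \<in> interconj ?G ?T (insert \<one>\<^bsub>?G\<^esub> ((\<lambda>(c, e). coord_perm p d c (\<phi> e)) ` S)) \<longleftrightarrow>
      g \<in> ?T \<and> (\<forall>c e. (c, e) \<in> S \<longrightarrow> g \<in> conjg ?G ?T (coord_perm p d c (\<phi> e)))" for g
    using diagT_subset_carrier[OF p] by (auto simp: interconj_def conj_one)
  show ?thesis
  proof (rule Set.set_eqI)
    fix g
    have "g \<in> interconj ?G ?T (insert \<one>\<^bsub>?G\<^esub> ((\<lambda>(c, e). coord_perm p d c (\<phi> e)) ` S)) \<longleftrightarrow>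
        (\<exists>a. (\<forall>i<d. 0 < a i \<and> a i < p) \<and> g = diag_map p d a \<and>
          (\<forall>c e. (c, e) \<in> S \<longrightarrow> diag_map p d a \<in> conjg ?G ?T (coord_perm p d c (\<phi> e))))"
      unfolding mem_iff unfolding diagT_eq by blast
    also have "\<dots> \<longleftrightarrow> (\<exists>a. (\<forall>i<d. 0 < a i \<and> a i < p) \<and> g = diag_map p d a \<and>
          (\<forall>c e. (c, e) \<in> S \<longrightarrow> [a c ^ e = 1] (mod p)))"
      using conj_coord by blast
    also have "\<dots> \<longleftrightarrow> g \<in> diag_roots p d S"
      unfolding diag_roots_def by blast
    finally show "g \<in> interconj ?G ?T (insert \<one>\<^bsub>?G\<^esub> ((\<lambda>(c, e). coord_perm p d c (\<phi> e)) ` S)) \<longleftrightarrow>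
        g \<in> diag_roots p d S" .
  qed
qed

lemma diag_roots_eq_one:
  assumes p: "1 < p" and S: "\<And>c. c < d \<Longrightarrow> (c, 1) \<in> S"
  shows "diag_roots p d S = {\<one>\<^bsub>SymV p d\<^esub>}"
proof
  show "diag_roots p d S \<subseteq> {\<one>\<^bsub>SymV p d\<^esub>}"
  proof
    fix g assume "g \<in> diag_roots p d S"
    then obtain a where a: "\<forall>i<d. 0 < a i \<and> a i < p" and ga: "g = diag_map p d a"
      and roots: "\<forall>c e. (c, e) \<in> S \<longrightarrow> [a c ^ e = 1] (mod p)"
      unfolding diag_roots_def by blast
    have "a c = 1" if "c < d" for c
    proof -
      have "[a c ^ 1 = 1] (mod p)" using roots S[OF that] by blast
      then show ?thesis using a that p by (simp add: cong_def)
    qed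
    then show "g \<in> {\<one>\<^bsub>SymV p d\<^esub>}" using ga diag_map_one by simp
  qed
next
  have "\<one>\<^bsub>SymV p d\<^esub> = diag_map p d (\<lambda>_. 1)" by (simp add: diag_map_one)
  then show "{\<one>\<^bsub>SymV p d\<^esub>} \<subseteq> diag_roots p d S"
    unfolding diag_roots_def using p by auto
qed

lemma diag_roots_insert_psubset:
  assumes p: "1 < p" and c: "c < d" and g: "0 < g" "g < p" "\<not> [g ^ e = 1] (mod p)"
    and S: "\<And>e'. (c, e') \<in> S \<Longrightarrow> [g ^ e' = 1] (mod p)"
  shows "diag_roots p d (insert (c, e) S) \<subset> diag_roots p d S"
proof
  show "diag_roots p d (insert (c, e) S) \<subseteq> diag_roots p d S"
    unfolding diag_roots_def by blast
  define a where "a = (\<lambda>_. 1)(c := g)"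
  have a_units: "\<forall>i<d. 0 < a i \<and> a i < p" using g p by (simp add: a_def)
  have "[a c' ^ e' = 1] (mod p)" if "(c', e') \<in> S" for c' e'
    using S that by (cases "c' = c") (simp_all add: a_def)
  then have "diag_map p d a \<in> diag_roots p d S"
    unfolding diag_roots_def using a_units by blast
  moreover have "diag_map p d a \<notin> diag_roots p d (insert (c, e) S)"
  proof
    assume "diag_map p d a \<in> diag_roots p d (insert (c, e) S)"
    then obtain a' where a': "\<forall>i<d. 0 < a' i \<and> a' i < p" and eq: "diag_map p d a = diag_map p d a'"
      and root: "[a' c ^ e = 1] (mod p)"
      unfolding diag_roots_def by blast
    have "a c = a' c" using diag_map_eq_imp_eq[OF eq p c] a_units a' c by blast
    then show False using root g by (simp add: a_def)
  qed
  ultimately show "diag_roots p d (insert (c, e) S) \<noteq> diag_roots p d S" by blast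
qed

(* The pairs (c, j) with j < m are enumerated as n = c * m + j. *)
definition chain_pairs :: "nat \<Rightarrow> (nat \<Rightarrow> nat) \<Rightarrow> nat \<Rightarrow> (nat \<times> nat) set" where
  "chain_pairs m E k = (\<lambda>n. (n div m, E (Suc (n mod m)))) ` {..<k}"

lemma chain_pairs_Suc: "chain_pairs m E (Suc k) = insert (k div m, E (Suc (k mod m))) (chain_pairs m E k)"
  by (simp add: chain_pairs_def lessThan_Suc)

lemma diag_roots_chain_pairs_psubset:
  assumes p: "prime p" and k: "k < d * m"
    and E_dvd: "\<And>i j. i \<le> j \<Longrightarrow> E j dvd E i" and E0: "E 0 = p - 1"
    and E_less: "\<And>j. j < m \<Longrightarrow> E (Suc j) < E j"
  shows "diag_roots p d (chain_pairs m E (Suc k)) \<subset> diag_roots p d (chain_pairs m E k)"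
proof -
  define c j where "c = k div m" and "j = k mod m"
  have m: "0 < m" using k by (cases m) auto
  have c: "c < d" and j: "j < m" using k m by (simp_all add: c_def j_def div_less_iff_less_mult)
  have p1: "1 < p" using p by (rule prime_gt_1_nat)
  have "E j dvd p - 1" using E_dvd[of 0 j] E0 by simp
  then obtain g where g: "0 < g" "g < p" and ord_g: "ord p g = E j"
    using exists_residue_with_ord[OF p] by blast
  have "E (Suc j) dvd p - 1" using E_dvd[of 0 "Suc j"] E0 by simp
  then have "0 < E (Suc j)" using p1 by (cases "E (Suc j)") auto
  then have "\<not> E j dvd E (Suc j)" using E_less[OF j] by (auto dest: dvd_imp_le)
  then have not_root: "\<not> [g ^ E (Suc j) = 1] (mod p)" using ord_divides[of g] ord_g by simp
  have earlier_roots: "[g ^ e' = 1] (mod p)" if ce: "(c, e') \<in> chain_pairs m E k" for e'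
  proof -
    obtain n where n: "n < k" "c = n div m" "e' = E (Suc (n mod m))"
      using ce unfolding chain_pairs_def by blast
    have "n mod m < j"
      using n m unfolding c_def j_def by (metis div_mult_mod_eq add_less_cancel_left)
    then have "E j dvd e'" using E_dvd n(3) by simp
    then show ?thesis using ord_divides[of g] ord_g by simp
  qed
  show ?thesis
    unfolding chain_pairs_Suc c_def[symmetric] j_def[symmetric]
    using p1 c g not_root earlier_roots by (rule diag_roots_insert_psubset)
qed

lemma diag_roots_chain_pairs_eq_one:
  assumes p: "1 < p" and m: "0 < m" and Em: "E m = 1"
  shows "diag_roots p d (chain_pairs m E (d * m)) = {\<one>\<^bsub>SymV p d\<^esub>}"
proof (rule diag_roots_eq_one[OF p])
  fix c assume "c < d"
  obtain m' where m': "m = Suc m'" using m by (cases m) auto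
  have "m' + c * m < m + c * m" using m' by simp
  also have "\<dots> \<le> d * m" using \<open>c < d\<close> by (simp add: mult_le_mono1 flip: mult_Suc)
  finally have "m' + c * m < d * m" .
  moreover have "m' < m" using m' by simp
  then have "(m' + c * m) div m = c" "(m' + c * m) mod m = m'" using m by simp_all
  ultimately show "(c, 1) \<in> chain_pairs m E (d * m)"
    unfolding chain_pairs_def using Em m' by (intro image_eqI[of _ _ "m' + c * m"]) simp_all
qed

lemma strict_conj_chain:
  assumes p: "prime p" "3 \<le> p" and d: "1 \<le> d"
    and E0: "E 0 = p - 1" and Em: "E m = 1"
    and E_dvd: "\<And>i j. i \<le> j \<Longrightarrow> E j dvd E i"
    and E_less: "\<And>j. j < m \<Longrightarrow> E (Suc j) < E j"
    and E_two: "\<And>j. j < m \<Longrightarrow> E (Suc j) = 2 \<Longrightarrow> 7 \<le> p"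
  shows "\<exists>Y :: nat \<Rightarrow> ((nat \<Rightarrow> nat) \<Rightarrow> (nat \<Rightarrow> nat)) set.
           (\<forall>i\<in>{1..d * m}. Y i \<subseteq> carrier (SymV p d)) \<and>
           interconj (SymV p d) (diagT p d) (Y 1) \<subset> diagT p d \<and>
           (\<forall>i\<in>{1..<d * m}. interconj (SymV p d) (diagT p d) (Y (Suc i))
                          \<subset> interconj (SymV p d) (diagT p d) (Y i)) \<and>
           interconj (SymV p d) (diagT p d) (Y (d * m)) = {\<one>\<^bsub>SymV p d\<^esub>}"
proof -
  have m: "0 < m" using E0 Em p(2) by (cases m) auto
  have "\<forall>e. \<exists>f. e dvd p - 1 \<and> (e = 2 \<longrightarrow> 7 \<le> p) \<longrightarrow> detects_roots p e f"
    using exists_detects_roots[OF p(1)] by blast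
  then obtain \<phi> where \<phi>: "\<And>e. e dvd p - 1 \<Longrightarrow> (e = 2 \<Longrightarrow> 7 \<le> p) \<Longrightarrow> detects_roots p e (\<phi> e)"
    by (metis choice)
  define Y where "Y k = insert \<one>\<^bsub>SymV p d\<^esub> ((\<lambda>(c, e). coord_perm p d c (\<phi> e)) ` chain_pairs m E k)"
    for k
  have pairs: "c < d \<and> detects_roots p e (\<phi> e)"
    if ce: "(c, e) \<in> chain_pairs m E k" and k: "k \<le> d * m" for c e k
  proof -
    obtain n where n: "n < k" "c = n div m" "e = E (Suc (n mod m))"
      using ce unfolding chain_pairs_def by blast
    have "e dvd p - 1" using E_dvd[of 0] E0 n(3) by simp
    moreover have "n mod m < m" using m by simp
    moreover have "c < d" using n k m by (simp add: div_less_iff_less_mult)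
    ultimately show ?thesis using n \<phi> E_two by simp
  qed
  have Y_eq: "interconj (SymV p d) (diagT p d) (Y k) = diag_roots p d (chain_pairs m E k)"
    if "k \<le> d * m" for k
    unfolding Y_def using p(1) pairs[OF _ that] by (rule interconj_eq_diag_roots)
  have strict: "diag_roots p d (chain_pairs m E (Suc k)) \<subset> diag_roots p d (chain_pairs m E k)"
    if "k < d * m" for k
    using p(1) that E_dvd E0 E_less by (rule diag_roots_chain_pairs_psubset)
  have final: "diag_roots p d (chain_pairs m E (d * m)) = {\<one>\<^bsub>SymV p d\<^esub>}"
    using p m Em by (intro diag_roots_chain_pairs_eq_one) simp_all
  show ?thesis
  proof (intro exI[of _ Y] conjI ballI)
    show "Y i \<subseteq> carrier (SymV p d)" if "i \<in> {1..d * m}" for i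
      using pairs that coord_perm_Bij
      unfolding Y_def detects_roots_def by (auto simp: BijGroup_def id_Bij)
    show "interconj (SymV p d) (diagT p d) (Y 1) \<subset> diagT p d"
      using strict[of 0] Y_eq[of 1] d m by (simp add: chain_pairs_def diag_roots_empty)
    show "interconj (SymV p d) (diagT p d) (Y (Suc i)) \<subset> interconj (SymV p d) (diagT p d) (Y i)"
      if "i \<in> {1..<d * m}" for i
      using strict[of i] Y_eq[of i] Y_eq[of "Suc i"] that by simp
    show "interconj (SymV p d) (diagT p d) (Y (d * m)) = {\<one>\<^bsub>SymV p d\<^esub>}"
      using Y_eq[of "d * m"] final by simp
  qed
qed

lemma prime_factorization_divisor_chain:
  fixes n :: nat
  assumes n: "0 < n"
  obtains E where "E 0 = n" "E (size (prime_factorization n)) = 1"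
    "\<And>i j. i \<le> j \<Longrightarrow> E j dvd E i"
    "\<And>j. j < size (prime_factorization n) \<Longrightarrow> E (Suc j) < E j"
proof -
  obtain qs where qs: "mset qs = prime_factorization n" using ex_mset by blast
  define E where "E j = prod_list (drop j qs)" for j
  have "E 0 = prod_mset (prime_factorization n)"
    unfolding E_def by (simp flip: qs prod_mset_prod_list)
  then have E0: "E 0 = n" using n by simp
  have size: "size (prime_factorization n) = length qs" by (simp flip: qs)
  have E_dvd: "E j dvd E i" if "i \<le> j" for i j
  proof -
    have "drop i qs = take (j - i) (drop i qs) @ drop j qs"
      using that by (metis append_take_drop_id drop_drop le_add_diff_inverse2)
    then show ?thesis unfolding E_def by (metis dvd_triv_right prod_list.append)
  qed
  have E_less: "E (Suc j) < E j" if "j < size (prime_factorization n)" for j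
  proof -
    have j: "j < length qs" using that size by simp
    then have "prime (qs ! j)" using qs by (metis in_prime_factors_imp_prime nth_mem set_mset_mset)
    then have "2 \<le> qs ! j" by (rule prime_ge_2_nat)
    moreover have "0 < E (Suc j)" using E_dvd[of 0 "Suc j"] E0 n by (auto intro: Nat.gr0I)
    moreover have "E j = qs ! j * E (Suc j)" using j by (simp add: E_def flip: Cons_nth_drop_Suc)
    ultimately show ?thesis by simp
  qed
  have E_last: "E (size (prime_factorization n)) = 1" using size by (simp add: E_def)
  from that[OF E0 E_last E_dvd E_less] show ?thesis .
qed

theorem lemma3p7:
  fixes p d :: nat
  assumes "prime p" and "p \<ge> 3" and "d \<ge> 1" and "p ^ d \<ge> 7"
  defines "l2 \<equiv> (if p \<in> {3, 5} then d else d * bigOmega (p - 1))"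
  shows "\<exists>Y :: nat \<Rightarrow> ((nat \<Rightarrow> nat) \<Rightarrow> (nat \<Rightarrow> nat)) set.
           (\<forall>i\<in>{1..l2}. Y i \<subseteq> carrier (SymV p d)) \<and>
           interconj (SymV p d) (diagT p d) (Y 1) \<subset> diagT p d \<and>
           (\<forall>i\<in>{1..<l2}. interconj (SymV p d) (diagT p d) (Y (Suc i))
                          \<subset> interconj (SymV p d) (diagT p d) (Y i)) \<and>
           interconj (SymV p d) (diagT p d) (Y l2) = {\<one>\<^bsub>SymV p d\<^esub>}"
proof (cases "p \<in> {3, 5}")
  case True
  then have "l2 = d * 1" by (simp add: l2_def)
  then show ?thesis
    using strict_conj_chain[of p d "\<lambda>j. if j = 0 then p - 1 else 1" 1] assms(1-3) by simp
next
  case False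
  have "odd p" "p \<noteq> 3" "p \<noteq> 5" using assms(1,2) prime_odd_nat False by auto
  with assms(2) have "7 \<le> p" by presburger
  obtain E where "E 0 = p - 1" "E (size (prime_factorization (p - 1))) = 1"
    "\<And>i j. i \<le> j \<Longrightarrow> E j dvd E i"
    "\<And>j. j < size (prime_factorization (p - 1)) \<Longrightarrow> E (Suc j) < E j"
    using prime_factorization_divisor_chain[of "p - 1"] assms(2) by auto
  moreover have "l2 = d * size (prime_factorization (p - 1))"
    using False by (simp add: l2_def bigOmega_def)
  ultimately show ?thesis
    using strict_conj_chain[of p d E] assms(1-3) \<open>7 \<le> p\<close> by simp
qed

end
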